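(* For every $n>1$ the complete graph $K_n$ admits no extended irregular dominating set, and for all positive integers $m,n$ the complete bipartite graph $K_{m,n}$ admits no extended irregular dominating set.
   Context: Let $\Gamma=(V,E)$ be a finite simple undirected graph with graph distance $d$. A vertex $v$ carrying a non-negative integer label $\ell$ dominates (covers) exactly the vertices $u$ with $d(u,v)=\ell$; a vertex labeled $0$ dominates only itself. An extended irregular dominating set is a set $S\subseteq V$ together with a labeling $\lambda:S\to\mathbb{Z}_{\ge 0}$ with distinct labels on distinct vertices, such that every vertex of $V$ is dominated by at least one vertex of $S$; it is assumed that some vertex of $S$ has label $0$. *)

theory Defs
  imports Main
begin

text \<open>Graph distance: d(u,v) = k iff there is a walk of length k
  from u to v inside V and no shorter one (vertices in different components have no
  distance, hence dominate nothing).\<close>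

definition simple_graph :: "'a set \<Rightarrow> ('a \<Rightarrow> 'a \<Rightarrow> bool) \<Rightarrow> bool" where
  "simple_graph V E \<longleftrightarrow> finite V \<and> (\<forall>u v. E u v \<longrightarrow> E v u) \<and> (\<forall>u. \<not> E u u)
     \<and> (\<forall>u v. E u v \<longrightarrow> u \<in> V \<and> v \<in> V)"

definition has_walk :: "'a set \<Rightarrow> ('a \<Rightarrow> 'a \<Rightarrow> bool) \<Rightarrow> 'a \<Rightarrow> 'a \<Rightarrow> nat \<Rightarrow> bool" where
  "has_walk V E u v k \<longleftrightarrow> (\<exists>xs. length xs = Suc k \<and> hd xs = u \<and> last xs = v \<and> set xs \<subseteq> V
     \<and> (\<forall>i<k. E (xs ! i) (xs ! Suc i)))"

definition graph_dist_eq :: "'a set \<Rightarrow> ('a \<Rightarrow> 'a \<Rightarrow> bool) \<Rightarrow> 'a \<Rightarrow> 'a \<Rightarrow> nat \<Rightarrow> bool" where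
  "graph_dist_eq V E u v k \<longleftrightarrow> has_walk V E u v k \<and> (\<forall>j<k. \<not> has_walk V E u v j)"

definition dominates :: "'a set \<Rightarrow> ('a \<Rightarrow> 'a \<Rightarrow> bool) \<Rightarrow> ('a \<Rightarrow> nat) \<Rightarrow> 'a \<Rightarrow> 'a \<Rightarrow> bool" where
  "dominates V E lab v u \<longleftrightarrow> graph_dist_eq V E u v (lab v)"

definition ext_irr_dom_set :: "'a set \<Rightarrow> ('a \<Rightarrow> 'a \<Rightarrow> bool) \<Rightarrow> 'a set \<Rightarrow> ('a \<Rightarrow> nat) \<Rightarrow> bool" where
  "ext_irr_dom_set V E S lab \<longleftrightarrow> S \<subseteq> V \<and> inj_on lab S \<and> (\<exists>v\<in>S. lab v = 0)
     \<and> (\<forall>u\<in>V. \<exists>v\<in>S. dominates V E lab v u)"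

definition admits_ext_irr_dom_set :: "'a set \<Rightarrow> ('a \<Rightarrow> 'a \<Rightarrow> bool) \<Rightarrow> bool" where
  "admits_ext_irr_dom_set V E \<longleftrightarrow> (\<exists>S lab. ext_irr_dom_set V E S lab)"

definition Kn_V :: "nat \<Rightarrow> nat set" where "Kn_V n = {0..<n}"
definition Kn_E :: "nat \<Rightarrow> nat \<Rightarrow> nat \<Rightarrow> bool" where
  "Kn_E n u v \<longleftrightarrow> u < n \<and> v < n \<and> u \<noteq> v"

definition Kmn_V :: "nat \<Rightarrow> nat \<Rightarrow> (nat + nat) set" where
  "Kmn_V m n = Inl ` {0..<m} \<union> Inr ` {0..<n}"
definition Kmn_E :: "nat \<Rightarrow> nat \<Rightarrow> nat + nat \<Rightarrow> nat + nat \<Rightarrow> bool" where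
  "Kmn_E m n u v \<longleftrightarrow> u \<in> Kmn_V m n \<and> v \<in> Kmn_V m n \<and>
     ((\<exists>a b. u = Inl a \<and> v = Inr b) \<or> (\<exists>a b. u = Inr a \<and> v = Inl b))"

end

theory Submission imports Defs begin

text \<open>In a connected graph of diameter at most 2, every vertex other than the one labelled 0
  is dominated by a vertex labelled 1 or 2. A vertex labelled 1 or 2 is not at distance 0
  from itself, so by injectivity it is dominated by the vertex carrying the other of these
  two labels. Hence both labels occur, on vertices b and c, and then d(b,c) = 2 while
  d(c,b) = 1, contradicting the symmetry of the distance. Both K_n (n > 1) and K_{m,n}
  have diameter at most 2.\<close>

lemma has_walk_0_iff: "has_walk V E u v 0 \<longleftrightarrow> u = v \<and> u \<in> V"
  unfolding has_walk_def by (auto simp: length_Suc_conv)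

lemma has_walk_snoc:
  assumes "has_walk V E u w k" "E w v" "v \<in> V"
  shows "has_walk V E u v (Suc k)"
proof -
  obtain xs where xs: "length xs = Suc k" "hd xs = u" "last xs = w" "set xs \<subseteq> V"
    "\<forall>i<k. E (xs ! i) (xs ! Suc i)"
    using assms(1) unfolding has_walk_def by blast
  then have "xs \<noteq> []" by auto
  have "E ((xs @ [v]) ! i) ((xs @ [v]) ! Suc i)" if "i < Suc k" for i
  proof (cases "i < k")
    case True
    then show ?thesis using xs by (simp add: nth_append)
  next
    case False
    with that have "i = k" by simp
    moreover have "xs ! k = w"
      using xs(1,3) \<open>xs \<noteq> []\<close> by (simp add: last_conv_nth)
    ultimately show ?thesis using xs(1) assms(2) by (simp add: nth_append)
  qed
  then show ?thesis
    unfolding has_walk_def using xs \<open>xs \<noteq> []\<close> assms(3) by (intro exI[of _ "xs @ [v]"]) auto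
qed

lemma has_walk_edge: "E u v \<Longrightarrow> u \<in> V \<Longrightarrow> v \<in> V \<Longrightarrow> has_walk V E u v 1"
  using has_walk_snoc[of V E u u 0 v] by (simp add: has_walk_0_iff)

lemma has_walk_sym:
  assumes "\<forall>x y. E x y \<longrightarrow> E y x" "has_walk V E u v k"
  shows "has_walk V E v u k"
proof -
  obtain xs where xs: "length xs = Suc k" "hd xs = u" "last xs = v" "set xs \<subseteq> V"
    "\<forall>i<k. E (xs ! i) (xs ! Suc i)"
    using assms(2) unfolding has_walk_def by blast
  have "E (rev xs ! i) (rev xs ! Suc i)" if "i < k" for i
  proof -
    have "E (xs ! (k - Suc i)) (xs ! Suc (k - Suc i))"
      using xs(5) that by simp
    then show ?thesis
      using assms(1) xs(1) that by (simp add: rev_nth Suc_diff_Suc)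
  qed
  moreover have "xs \<noteq> []" using xs(1) by auto
  ultimately show ?thesis
    unfolding has_walk_def using xs
    by (intro exI[of _ "rev xs"]) (simp add: hd_rev last_rev)
qed

lemma graph_dist_eq_unique:
  "graph_dist_eq V E u v j \<Longrightarrow> graph_dist_eq V E u v k \<Longrightarrow> j = k"
  unfolding graph_dist_eq_def by (metis linorder_neqE_nat)

lemma graph_dist_eq_sym:
  "\<forall>x y. E x y \<longrightarrow> E y x \<Longrightarrow> graph_dist_eq V E u v k \<Longrightarrow> graph_dist_eq V E v u k"
  unfolding graph_dist_eq_def by (metis has_walk_sym)

lemma graph_dist_eq_0_iff: "graph_dist_eq V E u v 0 \<longleftrightarrow> u = v \<and> u \<in> V"
  unfolding graph_dist_eq_def by (simp add: has_walk_0_iff)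

lemma has_walk_imp_graph_dist_le:
  assumes "has_walk V E u v k"
  shows "\<exists>j\<le>k. graph_dist_eq V E u v j"
  using ex_least_nat_le[of "has_walk V E u v" k] assms
  unfolding graph_dist_eq_def by metis

lemma dominates_self_iff: "v \<in> V \<Longrightarrow> dominates V E lab v v \<longleftrightarrow> lab v = 0"
  unfolding dominates_def by (metis graph_dist_eq_0_iff graph_dist_eq_unique)

lemma ext_irr_dom_set_dominator_label_1_or_2:
  assumes eids: "ext_irr_dom_set V E S lab"
    and diam: "\<forall>u\<in>V. \<forall>v\<in>V. \<exists>k\<le>2. has_walk V E u v k"
    and "s \<in> V" and not_zero: "\<forall>z\<in>S. lab z = 0 \<longrightarrow> z \<noteq> s"
  shows "\<exists>t\<in>S. dominates V E lab t s \<and> lab t \<in> {1, 2}"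
proof -
  obtain t where "t \<in> S" and dist: "graph_dist_eq V E s t (lab t)"
    using eids \<open>s \<in> V\<close> unfolding ext_irr_dom_set_def dominates_def by blast
  have "lab t \<noteq> 0"
    using dist not_zero \<open>t \<in> S\<close> by (metis graph_dist_eq_0_iff)
  moreover have "lab t \<le> 2"
  proof -
    have "t \<in> V" using eids \<open>t \<in> S\<close> unfolding ext_irr_dom_set_def by blast
    then obtain k where "k \<le> 2" "has_walk V E s t k" using diam \<open>s \<in> V\<close> by blast
    then obtain j where "j \<le> 2" "graph_dist_eq V E s t j"
      using has_walk_imp_graph_dist_le by (metis order_trans)
    then show ?thesis using dist graph_dist_eq_unique by metis
  qed
  ultimately show ?thesis
    using \<open>t \<in> S\<close> dist unfolding dominates_def by auto
qed

lemma ext_irr_dom_set_dominator_other_label: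
  assumes eids: "ext_irr_dom_set V E S lab"
    and diam: "\<forall>u\<in>V. \<forall>v\<in>V. \<exists>k\<le>2. has_walk V E u v k"
    and "s \<in> S" and s_label: "lab s \<in> {1, 2}"
  shows "\<exists>t\<in>S. dominates V E lab t s \<and> lab t \<in> {1, 2} \<and> lab t \<noteq> lab s"
proof -
  have "s \<in> V" using eids \<open>s \<in> S\<close> unfolding ext_irr_dom_set_def by blast
  moreover have "\<forall>z\<in>S. lab z = 0 \<longrightarrow> z \<noteq> s" using s_label by auto
  ultimately obtain t where "t \<in> S" "dominates V E lab t s" "lab t \<in> {1, 2}"
    using ext_irr_dom_set_dominator_label_1_or_2[OF eids diam] by blast
  moreover have "t \<noteq> s"
    using \<open>dominates V E lab t s\<close> dominates_self_iff[OF \<open>s \<in> V\<close>] s_label by auto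
  then have "lab t \<noteq> lab s"
    using eids \<open>t \<in> S\<close> \<open>s \<in> S\<close> unfolding ext_irr_dom_set_def by (meson inj_onD)
  ultimately show ?thesis by blast
qed

theorem no_ext_irr_dom_set_if_diameter_le_2:
  assumes sym: "\<forall>x y. E x y \<longrightarrow> E y x"
    and diam: "\<forall>u\<in>V. \<forall>v\<in>V. \<exists>k\<le>2. has_walk V E u v k"
    and "u \<in> V" "v \<in> V" "u \<noteq> v"
  shows "\<not> admits_ext_irr_dom_set V E"
proof
  assume "admits_ext_irr_dom_set V E"
  then obtain S lab where eids: "ext_irr_dom_set V E S lab"
    unfolding admits_ext_irr_dom_set_def by blast
  then obtain a where "a \<in> S" "lab a = 0"
    unfolding ext_irr_dom_set_def by blast
  have label_determines: "x = y" if "x \<in> S" "y \<in> S" "lab x = lab y" for x y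
    using eids that unfolding ext_irr_dom_set_def by (meson inj_onD)
  note other_label = ext_irr_dom_set_dominator_other_label[OF eids diam]
  obtain s0 where "s0 \<in> V" "s0 \<noteq> a"
    using \<open>u \<in> V\<close> \<open>v \<in> V\<close> \<open>u \<noteq> v\<close> by metis
  moreover have "\<forall>z\<in>S. lab z = 0 \<longrightarrow> z \<noteq> s0"
    using label_determines \<open>a \<in> S\<close> \<open>lab a = 0\<close> \<open>s0 \<noteq> a\<close> by metis
  ultimately obtain t0 where "t0 \<in> S" "lab t0 \<in> {1, 2}"
    using ext_irr_dom_set_dominator_label_1_or_2[OF eids diam] by blast
  then obtain b c where "b \<in> S" "lab b = 1" "c \<in> S" "lab c = 2"
    using other_label by (metis insertE singletonD)
  have "dominates V E lab c b"
  proof -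
    obtain t where "t \<in> S" "dominates V E lab t b" "lab t = 2"
      using other_label[of b] \<open>b \<in> S\<close> \<open>lab b = 1\<close> by auto
    then show ?thesis using label_determines[OF \<open>t \<in> S\<close> \<open>c \<in> S\<close>] \<open>lab c = 2\<close> by simp
  qed
  moreover have "dominates V E lab b c"
  proof -
    obtain t where "t \<in> S" "dominates V E lab t c" "lab t = 1"
      using other_label[of c] \<open>c \<in> S\<close> \<open>lab c = 2\<close> by auto
    then show ?thesis using label_determines[OF \<open>t \<in> S\<close> \<open>b \<in> S\<close>] \<open>lab b = 1\<close> by simp
  qed
  ultimately have "graph_dist_eq V E b c 2" "graph_dist_eq V E b c 1"
    using \<open>lab b = 1\<close> \<open>lab c = 2\<close> graph_dist_eq_sym[OF sym]
    unfolding dominates_def by auto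
  then show False using graph_dist_eq_unique by fastforce
qed

lemma Kn_no_ext_irr_dom_set:
  assumes "n > 1"
  shows "\<not> admits_ext_irr_dom_set (Kn_V n) (Kn_E n)"
proof (rule no_ext_irr_dom_set_if_diameter_le_2)
  show "\<forall>x y. Kn_E n x y \<longrightarrow> Kn_E n y x"
    by (auto simp: Kn_E_def)
  show "\<forall>u\<in>Kn_V n. \<forall>v\<in>Kn_V n. \<exists>k\<le>2. has_walk (Kn_V n) (Kn_E n) u v k"
    by (metis Kn_E_def Kn_V_def atLeastLessThan_iff has_walk_0_iff has_walk_edge
        one_le_numeral zero_le)
  show "0 \<in> Kn_V n" "1 \<in> Kn_V n" "0 \<noteq> (1::nat)"
    using assms by (auto simp: Kn_V_def)
qed

lemma Kmn_E_iff: "Kmn_E m n u v \<longleftrightarrow> u \<in> Kmn_V m n \<and> v \<in> Kmn_V m n \<and> isl u \<noteq> isl v"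
  unfolding Kmn_E_def by (cases u; cases v) auto

lemma Kmn_no_ext_irr_dom_set:
  assumes "m > 0" "n > 0"
  shows "\<not> admits_ext_irr_dom_set (Kmn_V m n) (Kmn_E m n)"
proof (rule no_ext_irr_dom_set_if_diameter_le_2)
  let ?V = "Kmn_V m n" and ?E = "Kmn_E m n"
  show "\<forall>x y. ?E x y \<longrightarrow> ?E y x"
    by (auto simp: Kmn_E_iff)
  show "Inl 0 \<in> ?V" "Inr 0 \<in> ?V"
    using assms by (auto simp: Kmn_V_def)
  show "\<forall>u\<in>?V. \<forall>v\<in>?V. \<exists>k\<le>2. has_walk ?V ?E u v k"
  proof (intro ballI)
    fix u v assume "u \<in> ?V" "v \<in> ?V"
    show "\<exists>k\<le>2. has_walk ?V ?E u v k"
    proof (cases "isl u = isl v")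
      case True
      obtain w where "w \<in> ?V" "isl w \<noteq> isl u"
        using \<open>Inl 0 \<in> ?V\<close> \<open>Inr 0 \<in> ?V\<close> by (metis sum.disc(1,2))
      then have "?E u w" "?E w v"
        using \<open>u \<in> ?V\<close> \<open>v \<in> ?V\<close> True by (auto simp: Kmn_E_iff)
      then have "has_walk ?V ?E u v (Suc 1)"
        using has_walk_snoc has_walk_edge \<open>u \<in> ?V\<close> \<open>v \<in> ?V\<close> \<open>w \<in> ?V\<close> by metis
      then show ?thesis by (metis Suc_1 order_refl)
    next
      case False
      then show ?thesis
        using has_walk_edge \<open>u \<in> ?V\<close> \<open>v \<in> ?V\<close> by (metis Kmn_E_iff one_le_numeral)
    qed
  qed
  show "Inl 0 \<noteq> (Inr 0 :: nat + nat)" by simp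
qed

theorem corollary2p3:
  shows "(\<forall>n::nat. n > 1 \<longrightarrow> \<not> admits_ext_irr_dom_set (Kn_V n) (Kn_E n))
    \<and> (\<forall>m n::nat. m > 0 \<longrightarrow> n > 0 \<longrightarrow> \<not> admits_ext_irr_dom_set (Kmn_V m n) (Kmn_E m n))"
  using Kn_no_ext_irr_dom_set Kmn_no_ext_irr_dom_set by blast

end
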